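(* For every $n\in\mathbb N$, $\left(\mathcal T_{(n)}\right)^d\simeq C(S^1)^{(n)}$, i.e. there is a unital complete order isomorphism between the operator system dual of $\mathcal T_{(n)}$ and the operator system of $n\times n$ Toeplitz matrices.
   Context: $C(S^1)_{(n)}$ is the space of continuous functions $f$ on the unit circle with Fourier coefficients $\hat f(k)=0$ for $|k|\ge n$. $T_f$ is the Toeplitz operator on the Hardy space $H^2(S^1)$ with symbol $f$ (compression to $H^2(S^1)$ of multiplication by $f$ on $L^2(S^1)$), and $\mathcal T_{(n)}=\{T_f:f\in C(S^1)_{(n)}\}$, an operator subsystem of $B(H^2(S^1))$. $C(S^1)^{(n)}$ is the operator subsystem of $M_n(\mathbb C)$ of Toeplitz matrices $[\tau_{k-\ell}]$ with unit the identity. For a finite-dimensional operator system $\mathcal R$, its dual $\mathcal R^d$ has matrix ordering: $[\varphi_{ij}]$ positive iff $r\mapsto[\varphi_{ij}(r)]$ is completely positive $\mathcal R\to M_p(\mathbb C)$; $(\mathcal T_{(n)})^d$ is given as order unit the faithful state $T_f\mapsto\hat f(0)$. *)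

theory Defs
  imports "HOL-Analysis.Analysis"
begin

text \<open>Functions on the unit circle are represented as complex functions, of which only the
values on the unit circle (sphere 0 1) matter.\<close>

definition fourier_coeff :: "(complex \<Rightarrow> complex) \<Rightarrow> int \<Rightarrow> complex" where
  "fourier_coeff f k =
     complex_of_real (1 / (2 * pi)) *
       integral {0..2 * pi} (\<lambda>t. f (cis t) * cis (- (of_int k * t)))"

definition trig_space :: "nat \<Rightarrow> (complex \<Rightarrow> complex) set" where
  "trig_space n = {f. continuous_on (sphere 0 1) f \<and>
                      (\<forall>k::int. \<bar>k\<bar> \<ge> int n \<longrightarrow> fourier_coeff f k = 0)}"

text \<open>H^2(S^1) is identified with l^2(N) via the orthonormal basis e_j(z) = z^j, j \<ge> 0.
In this basis the Toeplitz operator T_f (compression of multiplication by f) has matrix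
entries <T_f e_j, e_i> = fhat(i - j).\<close>

type_synonym hvec = "nat \<Rightarrow> complex"
type_synonym hop = "hvec \<Rightarrow> hvec"

definition in_l2 :: "hvec \<Rightarrow> bool" where
  "in_l2 x \<longleftrightarrow> (\<lambda>k. (cmod (x k))\<^sup>2) summable_on UNIV"

definition l2_inner :: "hvec \<Rightarrow> hvec \<Rightarrow> complex" where
  "l2_inner y x = infsum (\<lambda>k. y k * cnj (x k)) UNIV"

definition toeplitz_op :: "(complex \<Rightarrow> complex) \<Rightarrow> hop" where
  "toeplitz_op f x = (\<lambda>i. infsum (\<lambda>j. fourier_coeff f (int i - int j) * x j) UNIV)"

definition toeplitz_system :: "nat \<Rightarrow> hop set" where
  "toeplitz_system n = toeplitz_op ` trig_space n"

definition cnonneg :: "complex \<Rightarrow> bool" where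
  "cnonneg z \<longleftrightarrow> Im z = 0 \<and> Re z \<ge> 0"

definition opmat_pos :: "nat \<Rightarrow> (nat \<Rightarrow> nat \<Rightarrow> hop) \<Rightarrow> bool" where
  "opmat_pos m R \<longleftrightarrow>
     (\<forall>x :: nat \<Rightarrow> hvec. (\<forall>a<m. in_l2 (x a)) \<longrightarrow>
        cnonneg (\<Sum>a<m. \<Sum>b<m. l2_inner (R a b (x b)) (x a)))"

text \<open>Positivity of an element of M_m(M_p(C)) = M_{mp}(C), given as an m x m array of
p x p complex matrices (matrices as functions nat => nat => complex, indices < p used).\<close>
definition blockmat_pos :: "nat \<Rightarrow> nat \<Rightarrow> (nat \<Rightarrow> nat \<Rightarrow> nat \<Rightarrow> nat \<Rightarrow> complex) \<Rightarrow> bool" where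
  "blockmat_pos m p B \<longleftrightarrow>
     (\<forall>v :: nat \<Rightarrow> nat \<Rightarrow> complex.
        cnonneg (\<Sum>a<m. \<Sum>b<m. \<Sum>i<p. \<Sum>j<p. cnj (v a i) * B a b i j * v b j))"

type_synonym functional = "hop \<Rightarrow> complex"

definition op_add :: "hop \<Rightarrow> hop \<Rightarrow> hop" where
  "op_add T S = (\<lambda>x k. T x k + S x k)"

definition op_scale :: "complex \<Rightarrow> hop \<Rightarrow> hop" where
  "op_scale c T = (\<lambda>x k. c * T x k)"

text \<open>Linear functionals on T_(n); normalised to be 0 outside T_(n).\<close>
definition dual_space :: "nat \<Rightarrow> functional set" where
  "dual_space n = {\<phi>.
     (\<forall>T\<in>toeplitz_system n. \<forall>S\<in>toeplitz_system n. \<phi> (op_add T S) = \<phi> T + \<phi> S) \<and>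
     (\<forall>c. \<forall>T\<in>toeplitz_system n. \<phi> (op_scale c T) = c * \<phi> T) \<and>
     (\<forall>T. T \<notin> toeplitz_system n \<longrightarrow> \<phi> T = 0)}"

text \<open>[phi_ij] (p x p) is positive in M_p(dual) iff r |-> [phi_ij(r)] is completely positive
from T_(n) to M_p(C).\<close>
definition dual_mat_pos :: "nat \<Rightarrow> nat \<Rightarrow> (nat \<Rightarrow> nat \<Rightarrow> functional) \<Rightarrow> bool" where
  "dual_mat_pos n p \<Phi> \<longleftrightarrow>
     (\<forall>m. \<forall>R :: nat \<Rightarrow> nat \<Rightarrow> hop.
        (\<forall>a<m. \<forall>b<m. R a b \<in> toeplitz_system n) \<and> opmat_pos m R \<longrightarrow>
        blockmat_pos m p (\<lambda>a b i j. \<Phi> i j (R a b)))"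

type_synonym cmat = "nat \<Rightarrow> nat \<Rightarrow> complex"

definition toeplitz_mats :: "nat \<Rightarrow> cmat set" where
  "toeplitz_mats n = {A. \<exists>\<tau> :: int \<Rightarrow> complex.
      \<forall>k l. A k l = (if k < n \<and> l < n then \<tau> (int k - int l) else 0)}"

definition id_mat :: "nat \<Rightarrow> cmat" where
  "id_mat n = (\<lambda>k l. if k < n \<and> l < n \<and> k = l then 1 else 0)"

definition ucoi :: "nat \<Rightarrow> (functional \<Rightarrow> cmat) \<Rightarrow> bool" where
  "ucoi n \<Psi> \<longleftrightarrow>
     bij_betw \<Psi> (dual_space n) (toeplitz_mats n) \<and>
     (\<forall>\<phi>\<in>dual_space n. \<forall>\<psi>\<in>dual_space n.
        \<Psi> (\<lambda>T. \<phi> T + \<psi> T) = (\<lambda>k l. \<Psi> \<phi> k l + \<Psi> \<psi> k l)) \<and>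
     (\<forall>c. \<forall>\<phi>\<in>dual_space n. \<Psi> (\<lambda>T. c * \<phi> T) = (\<lambda>k l. c * \<Psi> \<phi> k l)) \<and>
     (\<forall>\<phi>\<in>dual_space n.
        (\<forall>f\<in>trig_space n. \<phi> (toeplitz_op f) = fourier_coeff f 0) \<longrightarrow> \<Psi> \<phi> = id_mat n) \<and>
     (\<forall>p. \<forall>\<Phi> :: nat \<Rightarrow> nat \<Rightarrow> functional.
        (\<forall>i<p. \<forall>j<p. \<Phi> i j \<in> dual_space n) \<longrightarrow>
        (dual_mat_pos n p \<Phi> \<longleftrightarrow> blockmat_pos p n (\<lambda>i j. \<Psi> (\<Phi> i j))))"

end

theory Submission
  imports Defs "HOL-Library.Complex_Order"
begin

text \<open>The isomorphism sends \<open>\<phi>\<close> to the Toeplitz matrix \<open>[\<phi>(T_(z^(k-l)))]_(k,l<n)\<close>; it is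
  linear, bijective and unital because the \<open>T_(z^d)\<close>, \<open>|d| < n\<close>, form a basis of \<open>T_(n)\<close>.
  If \<open>[\<phi>_ij]\<close> is positive, testing it on the positive operator matrix \<open>[T_(z^(a-b))]_(a,b<n)\<close>
  (a Gram matrix of shifted vectors) shows that its image is positive.  Conversely, let the
  image \<open>[\<tau>_ij(k-l)]\<close> be positive and \<open>[T_(c_ab)]\<close> a positive operator matrix.  The band of
  width \<open>n\<close> of \<open>\<tau>\<close> extends to a positive block matrix of every size \<open>N\<close> (completing
  overlapping positive blocks by Cholesky pivoting), and its Schur product with the \<open>N\<close>-th
  finite section of \<open>[T_(c_ab)]\<close> is positive.  Tested against a fixed vector, this Schur
  product grows affinely in \<open>N\<close> with slope \<open>\<Sum> v\<^sup>* [\<phi>_ij(T_(c_ab))] v\<close>, which is therefore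
  nonnegative.\<close>

section \<open>Positive semidefinite kernels on finite sets\<close>

definition sesq :: "'a set \<Rightarrow> ('a \<Rightarrow> 'a \<Rightarrow> complex) \<Rightarrow> ('a \<Rightarrow> complex) \<Rightarrow> ('a \<Rightarrow> complex) \<Rightarrow> complex"
  where "sesq S K u v = (\<Sum>x\<in>S. \<Sum>y\<in>S. cnj (u x) * K x y * v y)"

definition psd :: "'a set \<Rightarrow> ('a \<Rightarrow> 'a \<Rightarrow> complex) \<Rightarrow> bool"
  where "psd S K \<longleftrightarrow> (\<forall>v. 0 \<le> sesq S K v v)"

lemma cnonneg_iff_nonneg: "cnonneg z \<longleftrightarrow> 0 \<le> z"
  by (auto simp: cnonneg_def less_eq_complex_def)

lemma sesq_cong:
  "(\<And>x y. x \<in> S \<Longrightarrow> y \<in> S \<Longrightarrow> K x y = K' x y) \<Longrightarrow> sesq S K u v = sesq S K' u v"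
  unfolding sesq_def by (intro sum.cong refl) auto

lemma psd_cong:
  "(\<And>x y. x \<in> S \<Longrightarrow> y \<in> S \<Longrightarrow> K x y = K' x y) \<Longrightarrow> psd S K \<longleftrightarrow> psd S K'"
  unfolding psd_def using sesq_cong by metis

lemma sesq_product:
  "sesq (A \<times> B) K u v = (\<Sum>k\<in>A. \<Sum>a\<in>B. \<Sum>l\<in>A. \<Sum>b\<in>B. cnj (u (k,a)) * K (k,a) (l,b) * v (l,b))"
  unfolding sesq_def by (simp only: sum.cartesian_product')

lemma sesq_pair:
  assumes "x \<noteq> y"
  shows "sesq {x,y} K v v = cnj (v x) * K x x * v x + cnj (v x) * K x y * v y
     + cnj (v y) * K y x * v x + cnj (v y) * K y y * v y"
  using assms unfolding sesq_def by simp

lemma sesq_diff_left: "sesq S K (\<lambda>x. u x - u' x) v = sesq S K u v - sesq S K u' v"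
  unfolding sesq_def by (simp add: algebra_simps sum_subtractf)

lemma sesq_diff_right: "sesq S K u (\<lambda>x. v x - v' x) = sesq S K u v - sesq S K u v'"
  unfolding sesq_def by (simp add: algebra_simps sum_subtractf)

lemma sesq_point_left:
  assumes "finite S" "c \<in> S"
  shows "sesq S K (\<lambda>x. if x = c then s else 0) v = cnj s * (\<Sum>y\<in>S. K c y * v y)"
proof -
  have "sesq S K (\<lambda>x. if x = c then s else 0) v
      = (\<Sum>x\<in>S. if x = c then (\<Sum>y\<in>S. cnj s * K c y * v y) else 0)"
    unfolding sesq_def by (intro sum.cong) auto
  also have "\<dots> = (\<Sum>y\<in>S. cnj s * K c y * v y)" using assms by simp
  finally show ?thesis by (simp add: sum_distrib_left mult.assoc)
qed

lemma sesq_point_right: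
  assumes "finite S" "c \<in> S"
  shows "sesq S K u (\<lambda>x. if x = c then s else 0) = (\<Sum>x\<in>S. cnj (u x) * K x c) * s"
proof -
  have "sesq S K u (\<lambda>x. if x = c then s else 0) = (\<Sum>x\<in>S. cnj (u x) * K x c * s)"
    unfolding sesq_def using assms by (intro sum.cong) (auto simp: if_distrib cong: if_cong)
  then show ?thesis by (simp add: sum_distrib_right)
qed

lemma psd_pullback:
  assumes "finite Z" "finite X" "f ` Z \<subseteq> X" "psd X K"
  shows "psd Z (\<lambda>z w. K (f z) (f w))"
  unfolding psd_def
proof
  fix u :: "'a \<Rightarrow> complex"
  define U where "U x = (\<Sum>z\<in>{z\<in>Z. f z = x}. u z)" for x
  have group: "(\<Sum>z\<in>Z. F (f z) * G z) = (\<Sum>x\<in>X. F x * (\<Sum>z\<in>{z\<in>Z. f z = x}. G z))"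
    for F :: "'b \<Rightarrow> complex" and G
  proof -
    have "(\<Sum>z\<in>Z. F (f z) * G z) = (\<Sum>x\<in>X. \<Sum>z\<in>{z\<in>Z. f z = x}. F (f z) * G z)"
      using sum.group[OF assms(1,2,3), of "\<lambda>z. F (f z) * G z"] by simp
    also have "\<dots> = (\<Sum>x\<in>X. F x * (\<Sum>z\<in>{z\<in>Z. f z = x}. G z))"
      by (intro sum.cong refl) (simp add: sum_distrib_left)
    finally show ?thesis .
  qed
  have "sesq Z (\<lambda>z w. K (f z) (f w)) u u = (\<Sum>z\<in>Z. (\<Sum>w\<in>Z. K (f z) (f w) * u w) * cnj (u z))"
    unfolding sesq_def by (simp add: sum_distrib_left sum_distrib_right mult_ac)
  also have "\<dots> = (\<Sum>z\<in>Z. (\<Sum>y\<in>X. K (f z) y * U y) * cnj (u z))"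
    unfolding U_def group ..
  also have "\<dots> = (\<Sum>x\<in>X. (\<Sum>y\<in>X. K x y * U y) * cnj (U x))"
    using group[of "\<lambda>x. \<Sum>y\<in>X. K x y * U y" "\<lambda>z. cnj (u z)"] by (simp add: U_def cnj_sum)
  also have "\<dots> = sesq X K U U"
    unfolding sesq_def by (simp add: sum_distrib_left sum_distrib_right mult_ac)
  finally show "0 \<le> sesq Z (\<lambda>z w. K (f z) (f w)) u u" using assms(4) unfolding psd_def by simp
qed

lemma psd_subset: "finite S \<Longrightarrow> T \<subseteq> S \<Longrightarrow> psd S K \<Longrightarrow> psd T K"
  using psd_pullback[of T S id K] finite_subset by auto

lemma psd_diag_nonneg:
  assumes "finite S" "psd S K" "x \<in> S"
  shows "0 \<le> K x x"
proof -
  have "psd {x} K" using psd_subset assms by blast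
  then have "0 \<le> sesq {x} K (\<lambda>_. 1) (\<lambda>_. 1)" unfolding psd_def by blast
  then show ?thesis unfolding sesq_def by simp
qed

lemma psd_hermitian:
  assumes "finite S" "psd S K" "x \<in> S" "y \<in> S"
  shows "K y x = cnj (K x y)"
proof (cases "x = y")
  case True
  then show ?thesis using psd_diag_nonneg[OF assms(1-3)]
    by (auto simp: less_eq_complex_def complex_eq_iff)
next
  case False
  have P: "psd {x,y} K" using psd_subset assms by (metis empty_subsetI insert_subset)
  have "0 \<le> sesq {x,y} K (\<lambda>_. 1) (\<lambda>_. 1)" using P unfolding psd_def by blast
  then have re_test: "Im (K x x + K x y + K y x + K y y) = 0"
    using False by (simp add: sesq_pair less_eq_complex_def)
  have "0 \<le> sesq {x,y} K (\<lambda>z. if z = x then 1 else \<i>) (\<lambda>z. if z = x then 1 else \<i>)"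
    using P unfolding psd_def by blast
  then have im_test: "Im (K x x + K x y * \<i> - \<i> * K y x + K y y) = 0"
    using False by (simp add: sesq_pair less_eq_complex_def)
  have diag_real: "Im (K x x) = 0" "Im (K y y) = 0"
    using psd_diag_nonneg[OF assms(1-3)] psd_diag_nonneg[OF assms(1,2,4)]
    by (auto simp: less_eq_complex_def)
  show ?thesis using re_test im_test diag_real by (simp add: complex_eq_iff)
qed

lemma psd_row_zero_if_diag_zero:
  assumes "finite S" "psd S K" "c \<in> S" "y \<in> S" "K c c = 0"
  shows "K c y = 0"
proof (rule ccontr)
  assume ne: "K c y \<noteq> 0"
  then have "y \<noteq> c" using assms by auto
  have P: "psd {c,y} K" using psd_subset assms by (metis empty_subsetI insert_subset)
  define a where "a = K c y"
  \<comment> \<open>the test vector \<open>(-t a, 1)\<close> gives \<open>K y y - 2 t |a|^2 \<ge> 0\<close>, false for large \<open>t\<close>\<close>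
  define t where "t = (Re (K y y) + 1) / (cmod a)\<^sup>2"
  define v where "v = (\<lambda>z. if z = c then - (complex_of_real t * a) else 1)"
  have "0 \<le> sesq {c,y} K v v" using P unfolding psd_def by blast
  also have "sesq {c,y} K v v = K y y - 2 * complex_of_real t * (cnj a * a)"
    using \<open>y \<noteq> c\<close> assms(5) psd_hermitian[OF assms(1-4)]
    unfolding sesq_pair[OF \<open>y \<noteq> c\<close>[symmetric]] v_def a_def by (simp add: algebra_simps)
  also have "cnj a * a = complex_of_real ((cmod a)\<^sup>2)"
    by (metis complex_norm_square of_real_power mult.commute)
  also have "t * (cmod a)\<^sup>2 = Re (K y y) + 1"
    using ne by (simp add: t_def a_def)
  ultimately have "0 \<le> Re (K y y) - 2 * (Re (K y y) + 1)"
    by (simp add: less_eq_complex_def flip: of_real_mult)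
  moreover have "0 \<le> Re (K y y)"
    using psd_diag_nonneg[OF assms(1,2,4)] by (simp add: less_eq_complex_def)
  ultimately show False by simp
qed

lemma psd_schur_complement:
  assumes "finite S" "psd S K" "c \<in> S" "K c c = complex_of_real r" "r > 0"
  shows "psd S (\<lambda>x y. K x y - K x c * K c y / complex_of_real r)"
  unfolding psd_def
proof
  fix v
  define s where "s = (\<Sum>y\<in>S. K c y * v y) / complex_of_real r"
  define d where "d = (\<lambda>x. if x = c then s else 0)"
  have rs: "(\<Sum>y\<in>S. K c y * v y) = complex_of_real r * s"
    using assms(5) by (simp add: s_def)
  have ls: "(\<Sum>x\<in>S. cnj (v x) * K x c) = complex_of_real r * cnj s"
  proof -
    have "(\<Sum>x\<in>S. cnj (v x) * K x c) = (\<Sum>x\<in>S. cnj (K c x * v x))"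
      using psd_hermitian[OF assms(1-3)] by (intro sum.cong) auto
    also have "\<dots> = cnj (complex_of_real r * s)" using rs by (metis cnj_sum)
    finally show ?thesis by simp
  qed
  have "sesq S K (\<lambda>x. v x - d x) (\<lambda>x. v x - d x)
      = sesq S K v v - sesq S K v d - sesq S K d v + sesq S K d d"
    by (simp add: sesq_diff_left sesq_diff_right)
  also have "\<dots> = sesq S K v v - complex_of_real r * cnj s * s"
    unfolding d_def sesq_point_left[OF assms(1,3)] sesq_point_right[OF assms(1,3)] rs ls
    using assms(1,3,4) by (simp add: if_distrib algebra_simps cong: if_cong)
  also have "\<dots> = sesq S (\<lambda>x y. K x y - K x c * K c y / complex_of_real r) v v"
  proof -
    have "sesq S (\<lambda>x y. K x y - K x c * K c y / complex_of_real r) v v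
        = sesq S K v v - (\<Sum>x\<in>S. cnj (v x) * K x c) * (\<Sum>y\<in>S. K c y * v y) / complex_of_real r"
      unfolding sesq_def sum_product
      by (simp add: algebra_simps sum_subtractf sum_divide_distrib)
    then show ?thesis using rs ls assms(5) by simp
  qed
  finally show "0 \<le> sesq S (\<lambda>x y. K x y - K x c * K c y / complex_of_real r) v v"
    using assms(2) unfolding psd_def by metis
qed

lemma psd_rank_one: "psd S (\<lambda>x y. g x * cnj (g y))"
  unfolding psd_def
proof
  fix v
  have "sesq S (\<lambda>x y. g x * cnj (g y)) v v
      = (\<Sum>x\<in>S. cnj (v x) * g x) * cnj (\<Sum>x\<in>S. cnj (v x) * g x)"
    unfolding sesq_def by (simp add: sum_product algebra_simps)
  also have "\<dots> = complex_of_real ((cmod (\<Sum>x\<in>S. cnj (v x) * g x))\<^sup>2)"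
    by (metis complex_norm_square of_real_power)
  finally show "0 \<le> sesq S (\<lambda>x y. g x * cnj (g y)) v v"
    by (simp add: less_eq_complex_def)
qed

lemma psd_add: "psd S K \<Longrightarrow> psd S K' \<Longrightarrow> psd S (\<lambda>x y. K x y + K' x y)"
  unfolding psd_def sesq_def by (simp add: algebra_simps sum.distrib add_nonneg_nonneg)

lemma psd_extend_zero:
  assumes "finite S" "A \<subseteq> S" "psd A K"
  shows "psd S (\<lambda>x y. if x \<in> A \<and> y \<in> A then K x y else 0)"
  unfolding psd_def
proof
  fix v :: "'a \<Rightarrow> complex"
  have "sesq S (\<lambda>x y. if x \<in> A \<and> y \<in> A then K x y else 0) v v
      = (\<Sum>x\<in>S. if x \<in> A then \<Sum>y\<in>S. if y \<in> A then cnj (v x) * K x y * v y else 0 else 0)"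
    unfolding sesq_def by (intro sum.cong refl) (auto intro!: sum.cong)
  also have "\<dots> = sesq A K v v"
    using assms(1,2) by (simp add: sum.inter_restrict[symmetric] Int_absorb1 sesq_def)
  finally show "0 \<le> sesq S (\<lambda>x y. if x \<in> A \<and> y \<in> A then K x y else 0) v v"
    using assms(3) unfolding psd_def by simp
qed

lemma psd_direct_sum:
  assumes "finite A" "finite B" "A \<inter> B = {}" "psd A K" "psd B K"
  shows "psd (A \<union> B) (\<lambda>x y. if (x \<in> A \<and> y \<in> A) \<or> (x \<in> B \<and> y \<in> B) then K x y else 0)"
proof -
  have "psd (A \<union> B) (\<lambda>x y. (if x \<in> A \<and> y \<in> A then K x y else 0) + (if x \<in> B \<and> y \<in> B then K x y else 0))"
    using assms by (intro psd_add psd_extend_zero) auto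
  moreover have "(if x \<in> A \<and> y \<in> A then K x y else 0) + (if x \<in> B \<and> y \<in> B then K x y else 0)
      = (if (x \<in> A \<and> y \<in> A) \<or> (x \<in> B \<and> y \<in> B) then K x y else 0)" for x y
    using assms(3) by auto
  ultimately show ?thesis by simp
qed

text \<open>The pivot column of a Cholesky step, scaled by the square root of the pivot; for a zero
  pivot positivity forces the whole column to vanish, and the junk value \<open>0\<close> is harmless.\<close>

definition pivot_vec :: "('a \<Rightarrow> 'a \<Rightarrow> complex) \<Rightarrow> 'a \<Rightarrow> 'a \<Rightarrow> complex" where
  "pivot_vec K c x = (if Re (K c c) = 0 then 0 else K x c / complex_of_real (sqrt (Re (K c c))))"

lemma psd_subtract_pivot:
  assumes "finite S" "psd S K" "c \<in> S"
  defines "g \<equiv> pivot_vec K c"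
  shows "psd S (\<lambda>x y. K x y - g x * cnj (g y))"
    and "\<And>y. y \<in> S \<Longrightarrow> K c y - g c * cnj (g y) = 0 \<and> K y c - g y * cnj (g c) = 0"
proof -
  define r where "r = Re (K c c)"
  have Kcc: "K c c = complex_of_real r" "r \<ge> 0"
    using psd_diag_nonneg[OF assms(1-3)] by (auto simp: r_def less_eq_complex_def complex_eq_iff)
  have "psd S (\<lambda>x y. K x y - g x * cnj (g y)) \<and>
    (\<forall>y\<in>S. K c y - g c * cnj (g y) = 0 \<and> K y c - g y * cnj (g c) = 0)"
  proof (cases "r = 0")
    case True
    have "K c y = 0" "K y c = 0" if "y \<in> S" for y
      using psd_row_zero_if_diag_zero[OF assms(1-3) that] psd_hermitian[OF assms(1-3) that]
        Kcc True by simp_all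
    moreover have "g = (\<lambda>_. 0)" using True unfolding g_def pivot_vec_def r_def by auto
    ultimately show ?thesis using assms(2) by simp
  next
    case False
    then have "r > 0" using Kcc by simp
    have gg: "g x * cnj (g y) = K x c * K c y / complex_of_real r" if "y \<in> S" for x y
    proof -
      have "g x * cnj (g y) = K x c * cnj (K y c) / (complex_of_real (sqrt r) * complex_of_real (sqrt r))"
        using False unfolding g_def pivot_vec_def r_def by simp
      also have "complex_of_real (sqrt r) * complex_of_real (sqrt r) = complex_of_real r"
        using \<open>r > 0\<close> by (simp flip: of_real_mult)
      finally show ?thesis using psd_hermitian[OF assms(1-3) that] by simp
    qed
    have "psd S (\<lambda>x y. K x y - K x c * K c y / complex_of_real r)"
      by (rule psd_schur_complement[OF assms(1-3) Kcc(1) \<open>r > 0\<close>])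
    then have "psd S (\<lambda>x y. K x y - g x * cnj (g y))"
      by (subst psd_cong[where K' = "\<lambda>x y. K x y - K x c * K c y / complex_of_real r"]) (auto simp: gg)
    moreover have "K c y - g c * cnj (g y) = 0 \<and> K y c - g y * cnj (g c) = 0" if "y \<in> S" for y
      using gg[OF that, of c] gg[OF assms(3), of y] Kcc \<open>r > 0\<close> by auto
    ultimately show ?thesis by blast
  qed
  then show "psd S (\<lambda>x y. K x y - g x * cnj (g y))"
    and "\<And>y. y \<in> S \<Longrightarrow> K c y - g c * cnj (g y) = 0 \<and> K y c - g y * cnj (g c) = 0"
    by auto
qed

text \<open>Induction on the overlap: subtracting the pivot kernel of a common index clears its row
  and column in both blocks, so the index can be dropped from one of them and the pivot kernel
  added back afterwards.\<close>

lemma psd_overlap_completion: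
  assumes "finite A" "finite B" "psd A K" "psd B K"
  shows "\<exists>K'. psd (A \<union> B) K' \<and> (\<forall>x\<in>A. \<forall>y\<in>A. K' x y = K x y) \<and> (\<forall>x\<in>B. \<forall>y\<in>B. K' x y = K x y)"
  using assms
proof (induction "card (A \<inter> B)" arbitrary: B K rule: less_induct)
  case less
  show ?case
  proof (cases "A \<inter> B = {}")
    case True
    show ?thesis
      by (rule exI[of _ "\<lambda>x y. if (x \<in> A \<and> y \<in> A) \<or> (x \<in> B \<and> y \<in> B) then K x y else 0"])
         (use psd_direct_sum[OF less.prems(1,2) True less.prems(3,4)] in auto)
  next
    case False
    then obtain c where c: "c \<in> A" "c \<in> B" by blast
    define g where "g = pivot_vec K c"
    define K1 where "K1 x y = K x y - g x * cnj (g y)" for x y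
    have pA1: "psd A K1" and zA: "\<forall>y\<in>A. K1 c y = 0 \<and> K1 y c = 0"
      using psd_subtract_pivot[OF less.prems(1,3) c(1)] unfolding K1_def g_def by auto
    have pB1: "psd B K1" and zB: "\<forall>y\<in>B. K1 c y = 0 \<and> K1 y c = 0"
      using psd_subtract_pivot[OF less.prems(2,4) c(2)] unfolding K1_def g_def by auto
    have "A \<inter> (B - {c}) = (A \<inter> B) - {c}" by blast
    then have "card (A \<inter> (B - {c})) < card (A \<inter> B)"
      using c less.prems(1) by (metis IntI card_Diff1_less finite_Int)
    moreover have "psd (B - {c}) K1"
      using psd_subset[OF less.prems(2) _ pB1] by blast
    ultimately obtain K2 where K2: "psd (A \<union> (B - {c})) K2"
      "\<forall>x\<in>A. \<forall>y\<in>A. K2 x y = K1 x y" "\<forall>x\<in>B - {c}. \<forall>y\<in>B - {c}. K2 x y = K1 x y"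
      using less.hyps less.prems(1,2) pA1 by (metis finite_Diff)
    have AB: "A \<union> (B - {c}) = A \<union> B" using c by blast
    define K3 where "K3 x y = (if x \<in> A \<union> B - {c} \<and> y \<in> A \<union> B - {c} then K2 x y else 0)" for x y
    have "psd (A \<union> B) K3"
      unfolding K3_def using K2(1) AB less.prems(1,2)
      by (intro psd_extend_zero) (auto intro: psd_subset)
    then have "psd (A \<union> B) (\<lambda>x y. K3 x y + g x * cnj (g y))"
      by (rule psd_add[OF _ psd_rank_one])
    moreover have "K3 x y + g x * cnj (g y) = K x y"
      if "x \<in> A \<and> y \<in> A \<or> x \<in> B \<and> y \<in> B" for x y
    proof -
      have "K3 x y = K1 x y" using K2(2,3) zA zB that unfolding K3_def by auto
      then show ?thesis unfolding K1_def by simp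
    qed
    ultimately show ?thesis by blast
  qed
qed

lemma psd_rank_one_decomposition:
  assumes "finite S" "psd S K"
  shows "\<exists>(R::nat) g. \<forall>x\<in>S. \<forall>y\<in>S. K x y = (\<Sum>r<R. g r x * cnj (g r y))"
  using assms
proof (induction S arbitrary: K rule: finite_induct)
  case empty
  then show ?case by auto
next
  case (insert c F)
  define g where "g = pivot_vec K c"
  define K1 where "K1 x y = K x y - g x * cnj (g y)" for x y
  have p1: "psd (insert c F) K1" and z: "\<forall>y\<in>insert c F. K1 c y = 0 \<and> K1 y c = 0"
    using psd_subtract_pivot[OF _ insert.prems insertI1] insert.hyps(1)
    unfolding K1_def g_def by auto
  have "psd F K1" using psd_subset[OF _ subset_insertI p1] insert.hyps(1) by simp
  then obtain R :: nat and h where h: "\<forall>x\<in>F. \<forall>y\<in>F. K1 x y = (\<Sum>r<R. h r x * cnj (h r y))"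
    using insert.IH by blast
  define h' where "h' r x = (if r = R then g x else if x = c then 0 else h r x)" for r x
  have "K x y = (\<Sum>r<Suc R. h' r x * cnj (h' r y))" if "x \<in> insert c F" "y \<in> insert c F" for x y
  proof -
    have "(\<Sum>r<R. h' r x * cnj (h' r y)) = K1 x y"
    proof (cases "x = c \<or> y = c")
      case True
      then have "(\<Sum>r<R. h' r x * cnj (h' r y)) = 0" unfolding h'_def by (intro sum.neutral) auto
      then show ?thesis using z that True by auto
    next
      case False
      then have "(\<Sum>r<R. h' r x * cnj (h' r y)) = (\<Sum>r<R. h r x * cnj (h r y))"
        unfolding h'_def by (intro sum.cong) auto
      then show ?thesis using h that False by simp
    qed
    then show ?thesis unfolding K1_def h'_def by simp
  qed
  then show ?case by blast
qed

lemma psd_schur_product: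
  assumes "finite Z" "psd Z A" "psd Z B"
  shows "psd Z (\<lambda>x y. A x y * B x y)"
  unfolding psd_def
proof
  fix u :: "'a \<Rightarrow> complex"
  obtain R :: nat and g where g: "\<forall>x\<in>Z. \<forall>y\<in>Z. B x y = (\<Sum>r<R. g r x * cnj (g r y))"
    using psd_rank_one_decomposition[OF assms(1,3)] by blast
  define w where "w r x = u x * cnj (g r x)" for r x
  have "sesq Z (\<lambda>x y. A x y * B x y) u u = (\<Sum>x\<in>Z. \<Sum>y\<in>Z. \<Sum>r<R. cnj (w r x) * A x y * w r y)"
    unfolding sesq_def w_def using g
    by (intro sum.cong refl) (simp add: sum_distrib_left sum_distrib_right algebra_simps)
  also have "\<dots> = (\<Sum>r<R. sesq Z A (w r) (w r))"
    unfolding sesq_def by (simp only: sum.swap[of _ "{..<R}"])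
  finally show "0 \<le> sesq Z (\<lambda>x y. A x y * B x y) u u"
    using assms(2) unfolding psd_def by (simp add: sum_nonneg)
qed

section \<open>Band completion of positive block Toeplitz matrices\<close>

text \<open>Index pairs are \<open>(position, block index)\<close>.\<close>

definition block_toeplitz :: "(nat \<Rightarrow> nat \<Rightarrow> int \<Rightarrow> complex) \<Rightarrow> nat \<times> nat \<Rightarrow> nat \<times> nat \<Rightarrow> complex" where
  "block_toeplitz \<tau> x y = \<tau> (snd x) (snd y) (int (fst x) - int (fst y))"

lemma psd_block_toeplitz_translate:
  assumes "finite P" "psd ({..<n} \<times> P) (block_toeplitz \<tau>)"
  shows "psd ({s..<s+n} \<times> P) (block_toeplitz \<tau>)"
proof -
  define f where "f x = (fst x - s, snd x)" for x :: "nat \<times> nat"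
  have "psd ({s..<s+n} \<times> P) (\<lambda>x y. block_toeplitz \<tau> (f x) (f y))"
    by (rule psd_pullback[OF _ _ _ assms(2)]) (use assms(1) in \<open>auto simp: f_def\<close>)
  then show ?thesis
    by (rule iffD1[OF psd_cong, rotated]) (auto simp: f_def block_toeplitz_def)
qed

text \<open>Each step adds one block row, completing the old matrix together with a translate of the
  given one.  The completion need not be Toeplitz.\<close>

lemma block_toeplitz_band_completion:
  assumes G: "psd ({..<n} \<times> {..<p}) (block_toeplitz \<tau>)" and "1 \<le> n" "n \<le> N"
  shows "\<exists>H. psd ({..<N} \<times> {..<p}) H \<and>
    (\<forall>x\<in>{..<N} \<times> {..<p}. \<forall>y\<in>{..<N} \<times> {..<p}.
       \<bar>int (fst x) - int (fst y)\<bar> < int n \<longrightarrow> H x y = block_toeplitz \<tau> x y)"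
  using \<open>n \<le> N\<close>
proof (induction N rule: dec_induct)
  case base
  show ?case using G by blast
next
  case (step N)
  obtain H where H: "psd ({..<N} \<times> {..<p}) H"
    "\<forall>x\<in>{..<N} \<times> {..<p}. \<forall>y\<in>{..<N} \<times> {..<p}.
       \<bar>int (fst x) - int (fst y)\<bar> < int n \<longrightarrow> H x y = block_toeplitz \<tau> x y"
    using step.IH by blast
  define s where "s = Suc N - n"
  define A where "A = {..<N} \<times> {..<p}"
  define B where "B = {s..<s+n} \<times> {..<p}"
  have sn: "s + n = Suc N" using step.hyps(1) \<open>1 \<le> n\<close> unfolding s_def by simp
  define K where "K x y = (if x \<in> A \<and> y \<in> A then H x y else block_toeplitz \<tau> x y)" for x y
  have fin: "finite A" "finite B" unfolding A_def B_def by simp_all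
  have "psd A K"
    using H(1) unfolding A_def by (subst psd_cong[where K' = H]) (auto simp: K_def A_def)
  moreover have "psd B K"
  proof (subst psd_cong[where K' = "block_toeplitz \<tau>"])
    fix x y assume "x \<in> B" "y \<in> B"
    then have "\<bar>int (fst x) - int (fst y)\<bar> < int n" using sn unfolding B_def by auto
    then show "K x y = block_toeplitz \<tau> x y" using H(2) unfolding K_def A_def by auto
  qed (unfold B_def, rule psd_block_toeplitz_translate[OF _ G], simp)
  ultimately obtain K' where K': "psd (A \<union> B) K'"
    "\<forall>x\<in>A. \<forall>y\<in>A. K' x y = K x y" "\<forall>x\<in>B. \<forall>y\<in>B. K' x y = K x y"
    using psd_overlap_completion[OF fin] by blast
  have AB: "A \<union> B = {..<Suc N} \<times> {..<p}" using sn \<open>1 \<le> n\<close> unfolding A_def B_def by auto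
  have "K' x y = block_toeplitz \<tau> x y"
    if "x \<in> A \<union> B" "y \<in> A \<union> B" "\<bar>int (fst x) - int (fst y)\<bar> < int n" for x y
  proof (cases "x \<in> A \<and> y \<in> A")
    case True
    then show ?thesis using K'(2) H(2) that unfolding K_def A_def by auto
  next
    case False
    then have "x \<in> B \<and> y \<in> B" using that sn unfolding A_def B_def by auto
    then show ?thesis using K'(3) False unfolding K_def by auto
  qed
  then show ?case using K'(1) AB by auto
qed

section \<open>Toeplitz operators with banded symbols\<close>

lemma has_integral_cis_int:
  "((\<lambda>t. cis (of_int m * t)) has_integral (if m = 0 then complex_of_real (2*pi) else 0)) {0..2*pi}"
proof (cases "m = 0")
  case True
  show ?thesis
    using True has_integral_const_real[of "1::complex" 0 "2*pi"] by (simp add: scaleR_conv_of_real)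
next
  case False
  define A where "A = \<i> * complex_of_int m"
  have "A \<noteq> 0" using False by (simp add: A_def)
  have e: "exp (t *\<^sub>R A) = cis (of_int m * t)" for t
    by (simp add: A_def cis_conv_exp scaleR_conv_of_real algebra_simps)
  have "((\<lambda>t. exp (t *\<^sub>R A) * A) has_integral (exp ((2*pi) *\<^sub>R A) - exp (0 *\<^sub>R A))) {0..2*pi}"
    by (rule fundamental_theorem_of_calculus) (auto intro: exp_scaleR_has_vector_derivative_right)
  then have "((\<lambda>t. exp (t *\<^sub>R A) * A * inverse A) has_integral
      ((exp ((2*pi) *\<^sub>R A) - exp (0 *\<^sub>R A)) * inverse A)) {0..2*pi}"
    by (rule has_integral_mult_left)
  moreover have "exp ((2*pi) *\<^sub>R A) = 1"
    using e[of "2*pi"] cis_multiple_2pi[of "of_int m"] by (simp add: mult.commute)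
  ultimately have "((\<lambda>t. exp (t *\<^sub>R A)) has_integral 0) {0..2*pi}"
    using \<open>A \<noteq> 0\<close> by (simp add: mult.assoc)
  then show ?thesis using False e by simp
qed

definition diagonals :: "nat \<Rightarrow> int set" where
  "diagonals n = {1 - int n .. int n - 1}"

lemma mem_diagonals_iff: "k \<in> diagonals n \<longleftrightarrow> \<bar>k\<bar> < int n"
  unfolding diagonals_def by auto

lemma finite_diagonals [simp]: "finite (diagonals n)"
  unfolding diagonals_def by simp

lemma diff_mem_diagonals: "k < n \<Longrightarrow> l < n \<Longrightarrow> int k - int l \<in> diagonals n"
  unfolding mem_diagonals_iff by auto

definition banded :: "nat \<Rightarrow> (int \<Rightarrow> complex) \<Rightarrow> bool" where
  "banded n c \<longleftrightarrow> (\<forall>k. \<bar>k\<bar> \<ge> int n \<longrightarrow> c k = 0)"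

lemma banded_add: "banded n c \<Longrightarrow> banded n c' \<Longrightarrow> banded n (\<lambda>k. c k + c' k)"
  unfolding banded_def by simp

lemma banded_scale: "banded n c \<Longrightarrow> banded n (\<lambda>k. a * c k)"
  unfolding banded_def by simp

lemma banded_zero_outside: "banded n c \<Longrightarrow> d \<notin> diagonals n \<Longrightarrow> c d = 0"
  unfolding banded_def mem_diagonals_iff by simp

text \<open>The symbol of \<open>z^d\<close>, so that \<open>toeplitz (basis_symbol d)\<close> below is \<open>T_(z^d)\<close>.\<close>

definition basis_symbol :: "int \<Rightarrow> int \<Rightarrow> complex" where
  "basis_symbol d k = (if k = d then 1 else 0)"

lemma banded_basis_symbol: "d \<in> diagonals n \<Longrightarrow> banded n (basis_symbol d)"
  unfolding banded_def basis_symbol_def mem_diagonals_iff by auto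

lemma banded_eq_sum_basis_symbol:
  assumes "banded n c"
  shows "c = (\<lambda>k. \<Sum>d\<in>diagonals n. c d * basis_symbol d k)"
proof
  fix k
  show "c k = (\<Sum>d\<in>diagonals n. c d * basis_symbol d k)"
    using banded_zero_outside[OF assms, of k] by (auto simp: basis_symbol_def if_distrib cong: if_cong)
qed

definition trig_poly :: "nat \<Rightarrow> (int \<Rightarrow> complex) \<Rightarrow> complex \<Rightarrow> complex" where
  "trig_poly n c z = (\<Sum>d\<in>diagonals n. c d * z powi d)"

lemma fourier_coeff_trig_poly:
  assumes "banded n c"
  shows "fourier_coeff (trig_poly n c) = c"
proof
  fix k :: int
  have "trig_poly n c (cis t) * cis (- (of_int k * t)) = (\<Sum>d\<in>diagonals n. c d * cis (of_int (d - k) * t))" for t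
    unfolding trig_poly_def sum_distrib_right
    by (intro sum.cong refl) (simp add: cis_power_int mult.assoc cis_mult algebra_simps)
  moreover have "((\<lambda>t. \<Sum>d\<in>diagonals n. c d * cis (of_int (d - k) * t)) has_integral
      (\<Sum>d\<in>diagonals n. c d * (if d - k = 0 then complex_of_real (2*pi) else 0))) {0..2*pi}"
    by (intro has_integral_sum finite_diagonals has_integral_mult_right has_integral_cis_int)
  ultimately have "integral {0..2*pi} (\<lambda>t. trig_poly n c (cis t) * cis (- (of_int k * t)))
      = (\<Sum>d\<in>diagonals n. c d * (if d - k = 0 then complex_of_real (2*pi) else 0))"
    by (simp add: integral_unique)
  also have "\<dots> = c k * complex_of_real (2*pi)"
    using banded_zero_outside[OF assms, of k] by (auto simp: if_distrib cong: if_cong)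
  finally show "fourier_coeff (trig_poly n c) k = c k"
    unfolding fourier_coeff_def by simp
qed

lemma trig_poly_in_trig_space:
  assumes "banded n c"
  shows "trig_poly n c \<in> trig_space n"
proof -
  have "continuous_on (sphere 0 1) (trig_poly n c)"
    unfolding trig_poly_def by (intro continuous_intros) auto
  then show ?thesis
    using assms fourier_coeff_trig_poly[OF assms] unfolding trig_space_def banded_def by simp
qed

lemma banded_fourier_coeff: "f \<in> trig_space n \<Longrightarrow> banded n (fourier_coeff f)"
  unfolding trig_space_def banded_def by blast

definition toeplitz :: "(int \<Rightarrow> complex) \<Rightarrow> hop" where
  "toeplitz c x = (\<lambda>i. infsum (\<lambda>j. c (int i - int j) * x j) UNIV)"

lemma toeplitz_op_eq_toeplitz: "toeplitz_op f = toeplitz (fourier_coeff f)"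
  unfolding toeplitz_op_def toeplitz_def ..

lemma toeplitz_system_eq: "toeplitz_system n = toeplitz ` {c. banded n c}"
proof
  show "toeplitz_system n \<subseteq> toeplitz ` {c. banded n c}"
    unfolding toeplitz_system_def using banded_fourier_coeff toeplitz_op_eq_toeplitz by fastforce
  show "toeplitz ` {c. banded n c} \<subseteq> toeplitz_system n"
  proof
    fix T assume "T \<in> toeplitz ` {c. banded n c}"
    then obtain c where "banded n c" "T = toeplitz c" by blast
    then have "T = toeplitz_op (trig_poly n c)"
      by (simp add: toeplitz_op_eq_toeplitz fourier_coeff_trig_poly)
    then show "T \<in> toeplitz_system n"
      unfolding toeplitz_system_def using trig_poly_in_trig_space[OF \<open>banded n c\<close>] by blast
  qed
qed

lemma toeplitz_banded_apply:
  assumes "banded n c"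
  shows "toeplitz c x i = (\<Sum>j<i+n. c (int i - int j) * x j)"
proof -
  have "c (int i - int j) = 0" if "j \<notin> {..<i+n}" for j
    using assms that unfolding banded_def by simp
  then have "infsum (\<lambda>j. c (int i - int j) * x j) UNIV = infsum (\<lambda>j. c (int i - int j) * x j) {..<i+n}"
    by (intro infsum_cong_neutral) auto
  then show ?thesis unfolding toeplitz_def by simp
qed

lemma toeplitz_add:
  assumes "banded n c" "banded n c'"
  shows "op_add (toeplitz c) (toeplitz c') = toeplitz (\<lambda>k. c k + c' k)"
  unfolding op_add_def
  by (intro ext) (simp add: toeplitz_banded_apply[OF assms(1)] toeplitz_banded_apply[OF assms(2)]
      toeplitz_banded_apply[OF banded_add[OF assms]] sum.distrib algebra_simps)

lemma toeplitz_scale: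
  assumes "banded n c"
  shows "op_scale a (toeplitz c) = toeplitz (\<lambda>k. a * c k)"
  unfolding op_scale_def
  by (intro ext) (simp add: toeplitz_banded_apply[OF assms] toeplitz_banded_apply[OF banded_scale[OF assms]]
      sum_distrib_left algebra_simps)

text \<open>The entry of \<open>T\<close> in row \<open>nat d\<close> and column \<open>nat (-d)\<close>: one of the two is \<open>0\<close> and
  their difference is \<open>d\<close>.\<close>

definition symbol_of :: "hop \<Rightarrow> int \<Rightarrow> complex" where
  "symbol_of T d = T (\<lambda>j. if j = nat (- d) then 1 else 0) (nat d)"

lemma symbol_of_toeplitz [simp]: "symbol_of (toeplitz c) = c"
proof
  fix d
  have "symbol_of (toeplitz c) d = c (int (nat d) - int (nat (- d)))"
  proof -
    have "infsum (\<lambda>j. c (int (nat d) - int j) * (if j = nat (- d) then 1 else 0)) UNIV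
        = infsum (\<lambda>j. c (int (nat d) - int j) * (if j = nat (- d) then 1 else 0)) {nat (- d)}"
      by (intro infsum_cong_neutral) auto
    then show ?thesis unfolding symbol_of_def toeplitz_def by simp
  qed
  then show "symbol_of (toeplitz c) d = c d" by simp
qed

lemma symbol_of_add: "symbol_of (op_add T S) d = symbol_of T d + symbol_of S d"
  unfolding symbol_of_def op_add_def by simp

lemma symbol_of_scale: "symbol_of (op_scale a T) d = a * symbol_of T d"
  unfolding symbol_of_def op_scale_def by simp

lemma toeplitz_system_cases:
  assumes "T \<in> toeplitz_system n"
  shows "banded n (symbol_of T)" and "T = toeplitz (symbol_of T)"
  using assms unfolding toeplitz_system_eq by auto

lemma toeplitz_in_toeplitz_system: "banded n c \<Longrightarrow> toeplitz c \<in> toeplitz_system n"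
  unfolding toeplitz_system_eq by blast

lemma toeplitz_system_add:
  assumes "T \<in> toeplitz_system n" "S \<in> toeplitz_system n"
  shows "op_add T S \<in> toeplitz_system n"
proof -
  obtain c c' where "banded n c" "banded n c'" "T = toeplitz c" "S = toeplitz c'"
    using assms unfolding toeplitz_system_eq by blast
  then show ?thesis by (simp add: toeplitz_add toeplitz_in_toeplitz_system banded_add)
qed

lemma toeplitz_system_scale:
  assumes "T \<in> toeplitz_system n"
  shows "op_scale a T \<in> toeplitz_system n"
proof -
  obtain c where "banded n c" "T = toeplitz c"
    using assms unfolding toeplitz_system_eq by blast
  then show ?thesis by (simp add: toeplitz_scale toeplitz_in_toeplitz_system banded_scale)
qed

lemma dual_space_toeplitz_scale:
  assumes "\<phi> \<in> dual_space n" "banded n c"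
  shows "\<phi> (toeplitz (\<lambda>k. a * c k)) = a * \<phi> (toeplitz c)"
proof -
  have "\<phi> (op_scale a (toeplitz c)) = a * \<phi> (toeplitz c)"
    using assms toeplitz_in_toeplitz_system unfolding dual_space_def by blast
  then show ?thesis by (simp add: toeplitz_scale[OF assms(2)])
qed

lemma dual_space_toeplitz_sum:
  assumes "\<phi> \<in> dual_space n" "finite E" "\<And>d. d \<in> E \<Longrightarrow> banded n (c d)"
  shows "\<phi> (toeplitz (\<lambda>k. \<Sum>d\<in>E. c d k)) = (\<Sum>d\<in>E. \<phi> (toeplitz (c d)))"
  using assms(2,3)
proof (induction E rule: finite_induct)
  case empty
  have "banded n (\<lambda>k. 0)" unfolding banded_def by simp
  then show ?case using dual_space_toeplitz_scale[OF assms(1), of "\<lambda>k. 0" 0] by simp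
next
  case (insert e E)
  have "banded n (\<lambda>k. \<Sum>d\<in>E. c d k)"
    using insert.prems unfolding banded_def by simp
  moreover have "banded n (c e)" using insert.prems by simp
  ultimately have "\<phi> (toeplitz (\<lambda>k. c e k + (\<Sum>d\<in>E. c d k)))
      = \<phi> (toeplitz (c e)) + \<phi> (toeplitz (\<lambda>k. \<Sum>d\<in>E. c d k))"
    using assms(1) toeplitz_in_toeplitz_system unfolding dual_space_def
    by (simp flip: toeplitz_add)
  then show ?case using insert by simp
qed

lemma dual_space_toeplitz_expand:
  assumes "\<phi> \<in> dual_space n" "banded n c"
  shows "\<phi> (toeplitz c) = (\<Sum>d\<in>diagonals n. c d * \<phi> (toeplitz (basis_symbol d)))"
proof -
  have "\<phi> (toeplitz c) = \<phi> (toeplitz (\<lambda>k. \<Sum>d\<in>diagonals n. c d * basis_symbol d k))"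
    by (subst banded_eq_sum_basis_symbol[OF assms(2)]) (rule refl)
  also have "\<dots> = (\<Sum>d\<in>diagonals n. \<phi> (toeplitz (\<lambda>k. c d * basis_symbol d k)))"
    using assms(1) by (intro dual_space_toeplitz_sum) (auto intro: banded_scale banded_basis_symbol)
  also have "\<dots> = (\<Sum>d\<in>diagonals n. c d * \<phi> (toeplitz (basis_symbol d)))"
    using assms(1) by (intro sum.cong refl dual_space_toeplitz_scale banded_basis_symbol)
  finally show ?thesis .
qed

section \<open>Positivity of shift matrices and of finite sections\<close>

lemma summable_on_sum_infsum_sum:
  fixes f :: "'i \<Rightarrow> 'a \<Rightarrow> complex"
  assumes "finite I" "\<And>i. i \<in> I \<Longrightarrow> f i summable_on A"
  shows "(\<lambda>x. \<Sum>i\<in>I. f i x) summable_on A" and "infsum (\<lambda>x. \<Sum>i\<in>I. f i x) A = (\<Sum>i\<in>I. infsum (f i) A)"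
proof -
  have "(\<lambda>x. \<Sum>i\<in>I. f i x) summable_on A \<and> infsum (\<lambda>x. \<Sum>i\<in>I. f i x) A = (\<Sum>i\<in>I. infsum (f i) A)"
    using assms
  proof (induction I rule: finite_induct)
    case (insert i I)
    then have "f i summable_on A" "(\<lambda>x. \<Sum>i\<in>I. f i x) summable_on A"
      "infsum (\<lambda>x. \<Sum>i\<in>I. f i x) A = (\<Sum>i\<in>I. infsum (f i) A)"
      by auto
    then show ?case using summable_on_add infsum_add insert.hyps by fastforce
  qed simp
  then show "(\<lambda>x. \<Sum>i\<in>I. f i x) summable_on A" and "infsum (\<lambda>x. \<Sum>i\<in>I. f i x) A = (\<Sum>i\<in>I. infsum (f i) A)"
    by auto
qed

lemma summable_on_mult_cnj:
  fixes u w :: "'a \<Rightarrow> complex"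
  assumes "(\<lambda>j. (cmod (u j))\<^sup>2) summable_on A" "(\<lambda>j. (cmod (w j))\<^sup>2) summable_on A"
  shows "(\<lambda>j. u j * cnj (w j)) summable_on A"
proof -
  have "(\<lambda>j. norm (u j * cnj (w j))) summable_on A"
  proof (rule summable_on_comparison_test[OF summable_on_add[OF assms]])
    fix j
    have "cmod (u j) * cmod (w j) \<le> (cmod (u j))\<^sup>2 + (cmod (w j))\<^sup>2"
      by (smt (verit) norm_ge_zero power2_eq_square mult_left_mono mult_right_mono sum_squares_bound)
    then show "norm (u j * cnj (w j)) \<le> (cmod (u j))\<^sup>2 + (cmod (w j))\<^sup>2"
      by (simp add: norm_mult)
  qed simp
  then show ?thesis by (rule abs_summable_summable)
qed

definition shift_embed :: "nat \<Rightarrow> hvec \<Rightarrow> int \<Rightarrow> complex" where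
  "shift_embed a y j = (if j + int a \<ge> 0 then y (nat (j + int a)) else 0)"

lemma square_summable_shift_embed:
  assumes "in_l2 y"
  shows "(\<lambda>j. (cmod (shift_embed a y j))\<^sup>2) summable_on UNIV"
proof -
  have "(\<lambda>j. (cmod (shift_embed a y j))\<^sup>2) summable_on UNIV
      \<longleftrightarrow> (\<lambda>j. (cmod (shift_embed a y j))\<^sup>2) summable_on {j. j \<ge> - int a}"
    by (intro summable_on_cong_neutral) (auto simp: shift_embed_def)
  also have "\<dots> \<longleftrightarrow> (\<lambda>k. (cmod (y k))\<^sup>2) summable_on UNIV"
    by (rule summable_on_reindex_bij_witness[where j = "\<lambda>j. nat (j + int a)" and i = "\<lambda>k. int k - int a"])
       (auto simp: shift_embed_def)
  finally show ?thesis using assms unfolding in_l2_def by simp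
qed

lemma toeplitz_basis_symbol_apply:
  "toeplitz (basis_symbol e) y i = (if int i - e \<ge> 0 then y (nat (int i - e)) else 0)"
proof -
  have "toeplitz (basis_symbol e) y i
      = infsum (\<lambda>j. basis_symbol e (int i - int j) * y j) ({nat (int i - e)} \<inter> {j. int i - e \<ge> 0})"
    unfolding toeplitz_def by (intro infsum_cong_neutral) (auto simp: basis_symbol_def)
  then show ?thesis by (cases "int i - e \<ge> 0") (auto simp: basis_symbol_def)
qed

lemma l2_inner_toeplitz_basis_symbol:
  "l2_inner (toeplitz (basis_symbol (int a - int b)) x) y
    = infsum (\<lambda>j. shift_embed b x j * cnj (shift_embed a y j)) UNIV"
proof -
  have "l2_inner (toeplitz (basis_symbol (int a - int b)) x) y
      = infsum (\<lambda>k. (if int k - int a + int b \<ge> 0 then x (nat (int k - int a + int b)) else 0) * cnj (y k)) UNIV"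
    unfolding l2_inner_def toeplitz_basis_symbol_apply by (intro infsum_cong) (simp add: algebra_simps)
  also have "\<dots> = infsum (\<lambda>j. shift_embed b x j * cnj (shift_embed a y j)) {j. j \<ge> - int a}"
    by (rule infsum_reindex_bij_witness[where j = "\<lambda>k. int k - int a" and i = "\<lambda>j. nat (j + int a)"])
       (auto simp: shift_embed_def algebra_simps)
  also have "\<dots> = infsum (\<lambda>j. shift_embed b x j * cnj (shift_embed a y j)) UNIV"
    by (intro infsum_cong_neutral) (auto simp: shift_embed_def)
  finally show ?thesis .
qed

text \<open>Embedding \<open>x_a\<close> into \<open>l^2(Z)\<close> shifted by \<open>-a\<close> turns \<open>[T_(z^(a-b))]\<close> into the Gram matrix
  of the embedded vectors.\<close>

lemma opmat_pos_basis_shifts: "opmat_pos n (\<lambda>a b. toeplitz (basis_symbol (int a - int b)))"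
  unfolding opmat_pos_def cnonneg_iff_nonneg
proof (intro allI impI)
  fix x :: "nat \<Rightarrow> hvec"
  assume "\<forall>a<n. in_l2 (x a)"
  define Y where "Y a = shift_embed a (x a)" for a
  define I where "I = {..<n} \<times> {..<n}"
  define f where "f ab j = Y (snd ab) j * cnj (Y (fst ab) j)" for ab j
  have "f ab summable_on UNIV" if "ab \<in> I" for ab
    using that \<open>\<forall>a<n. in_l2 (x a)\<close> unfolding f_def Y_def I_def
    by (auto intro!: summable_on_mult_cnj square_summable_shift_embed)
  note sum_infsum = summable_on_sum_infsum_sum[of I f UNIV, OF _ this]
  have "(\<Sum>a<n. \<Sum>b<n. l2_inner (toeplitz (basis_symbol (int a - int b)) (x b)) (x a))
      = (\<Sum>ab\<in>I. infsum (f ab) UNIV)"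
    unfolding l2_inner_toeplitz_basis_symbol I_def f_def Y_def sum.cartesian_product' by simp
  also have "\<dots> = infsum (\<lambda>j. \<Sum>ab\<in>I. f ab j) UNIV"
    using sum_infsum(2) I_def by simp
  also have "\<dots> \<ge> 0"
  proof (rule infsum_nonneg_complex)
    show "(\<lambda>j. \<Sum>ab\<in>I. f ab j) summable_on UNIV" using sum_infsum(1) I_def by simp
    fix j
    have "(\<Sum>ab\<in>I. f ab j) = (\<Sum>a<n. \<Sum>b<n. Y b j * cnj (Y a j))"
      unfolding I_def f_def sum.cartesian_product' by simp
    also have "\<dots> = (\<Sum>b<n. Y b j) * cnj (\<Sum>a<n. Y a j)"
      unfolding cnj_sum sum_product by (rule sum.swap)
    also have "\<dots> = complex_of_real ((cmod (\<Sum>a<n. Y a j))\<^sup>2)"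
      by (metis complex_norm_square of_real_power)
    finally show "0 \<le> (\<Sum>ab\<in>I. f ab j)" by (simp add: less_eq_complex_def)
  qed
  finally show "0 \<le> (\<Sum>a<n. \<Sum>b<n. l2_inner (toeplitz (basis_symbol (int a - int b)) (x b)) (x a))" .
qed

lemma psd_finite_section:
  assumes "opmat_pos m (\<lambda>a b. toeplitz (c a b))"
  shows "psd ({..<N} \<times> {..<m}) (block_toeplitz c)"
  unfolding psd_def
proof
  fix U :: "nat \<times> nat \<Rightarrow> complex"
  define x where "x a k = (if k < N then U (k, a) else 0)" for a k
  have l2: "in_l2 (x a)" for a
  proof -
    have "(\<lambda>k. (cmod (x a k))\<^sup>2) summable_on UNIV \<longleftrightarrow> (\<lambda>k. (cmod (x a k))\<^sup>2) summable_on {..<N}"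
      by (intro summable_on_cong_neutral) (auto simp: x_def)
    then show ?thesis unfolding in_l2_def by simp
  qed
  have inner: "l2_inner (toeplitz c' (x b)) (x a)
      = (\<Sum>k<N. \<Sum>l<N. cnj (U (k, a)) * c' (int k - int l) * U (l, b))" for c' a b
  proof -
    have "infsum (\<lambda>l. c' (int k - int l) * x b l) UNIV = infsum (\<lambda>l. c' (int k - int l) * x b l) {..<N}"
      for k by (intro infsum_cong_neutral) (auto simp: x_def)
    then have T: "toeplitz c' (x b) k = (\<Sum>l<N. c' (int k - int l) * U (l, b))" for k
      unfolding toeplitz_def by (simp add: x_def)
    have "infsum (\<lambda>k. toeplitz c' (x b) k * cnj (x a k)) UNIV
        = infsum (\<lambda>k. toeplitz c' (x b) k * cnj (x a k)) {..<N}"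
      by (intro infsum_cong_neutral) (auto simp: x_def)
    then show ?thesis
      unfolding l2_inner_def T by (simp add: x_def sum_distrib_right sum_distrib_left mult_ac)
  qed
  have "0 \<le> (\<Sum>a<m. \<Sum>b<m. l2_inner (toeplitz (c a b) (x b)) (x a))"
    using assms l2 unfolding opmat_pos_def cnonneg_iff_nonneg by blast
  also have "\<dots> = (\<Sum>a<m. \<Sum>b<m. \<Sum>k<N. \<Sum>l<N. cnj (U (k, a)) * c a b (int k - int l) * U (l, b))"
    unfolding inner ..
  also have "\<dots> = (\<Sum>a<m. \<Sum>k<N. \<Sum>b<m. \<Sum>l<N. cnj (U (k, a)) * c a b (int k - int l) * U (l, b))"
    by (rule sum.cong[OF refl], rule sum.swap)
  also have "\<dots> = (\<Sum>k<N. \<Sum>a<m. \<Sum>l<N. \<Sum>b<m. cnj (U (k, a)) * c a b (int k - int l) * U (l, b))"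
    by (subst sum.swap) (rule sum.cong[OF refl], rule sum.cong[OF refl], rule sum.swap)
  also have "\<dots> = sesq ({..<N} \<times> {..<m}) (block_toeplitz c) U U"
    unfolding sesq_product block_toeplitz_def by simp
  finally show "0 \<le> sesq ({..<N} \<times> {..<m}) (block_toeplitz c) U U" .
qed

lemma nonneg_if_affine_nonneg:
  fixes s q :: complex
  assumes "\<And>t::nat. 0 \<le> s + of_nat t * q"
  shows "0 \<le> q"
proof -
  have "Im s = 0" "Re s \<ge> 0" "Im (s + q) = 0"
    using assms[of 0] assms[of 1] by (auto simp: less_eq_complex_def)
  moreover have "Re q \<ge> 0"
  proof (rule ccontr)
    assume "\<not> Re q \<ge> 0"
    define t where "t = nat \<lceil>Re s / (- Re q)\<rceil> + 1"
    have "real t > Re s / (- Re q)" unfolding t_def by linarith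
    then have "Re s + real t * Re q < 0" using \<open>\<not> Re q \<ge> 0\<close> by (simp add: field_simps)
    moreover have "0 \<le> Re (s + of_nat t * q)" using assms[of t] by (simp add: less_eq_complex_def)
    ultimately show False by simp
  qed
  ultimately show ?thesis by (simp add: less_eq_complex_def)
qed

lemma sum_toeplitz_square_Suc:
  fixes h :: "int \<Rightarrow> complex"
  assumes "\<And>d. d \<notin> diagonals n \<Longrightarrow> h d = 0" and "n \<le> N"
  shows "(\<Sum>k<Suc N. \<Sum>l<Suc N. h (int k - int l))
    = (\<Sum>k<N. \<Sum>l<N. h (int k - int l)) + (\<Sum>d\<in>diagonals n. h d)"
proof -
  have "(\<Sum>k<Suc N. \<Sum>l<Suc N. h (int k - int l))
      = (\<Sum>k<N. \<Sum>l<N. h (int k - int l)) + ((\<Sum>k<N. h (int k - int N)) + (\<Sum>l<N. h (int N - int l)) + h 0)"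
    by (simp add: sum.distrib algebra_simps)
  also have "(\<Sum>l<N. h (int N - int l)) = (\<Sum>d\<in>{1..int N}. h d)"
    by (rule sum.reindex_bij_witness[where j = "\<lambda>l. int N - int l" and i = "\<lambda>d. N - nat d"]) auto
  also have "(\<Sum>k<N. h (int k - int N)) = (\<Sum>d\<in>{- int N..-1}. h d)"
    by (rule sum.reindex_bij_witness[where j = "\<lambda>k. int k - int N" and i = "\<lambda>d. nat (d + int N)"]) auto
  also have "(\<Sum>d\<in>{- int N..-1}. h d) + (\<Sum>d\<in>{1..int N}. h d) + h 0 = (\<Sum>d\<in>{- int N..int N}. h d)"
  proof -
    have "{- int N..int N} = {- int N..-1} \<union> ({0} \<union> {1..int N})" by auto
    then show ?thesis by (simp add: sum.union_disjoint algebra_simps)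
  qed
  also have "(\<Sum>d\<in>{- int N..int N}. h d) = (\<Sum>d\<in>diagonals n. h d)"
    using assms by (intro sum.mono_neutral_right) (auto simp: diagonals_def)
  finally show ?thesis .
qed

text \<open>The contribution of the \<open>d\<close>-th diagonal when the \<open>m x m\<close> operator matrix \<open>[T_(c a b)]\<close> is
  paired with the block Toeplitz matrix \<open>[\<tau> i j (k - l)]\<close> (blocks of size \<open>p\<close>) and tested
  against the vector \<open>v\<close>.\<close>

definition diag_pairing ::
    "nat \<Rightarrow> nat \<Rightarrow> (nat \<Rightarrow> nat \<Rightarrow> int \<Rightarrow> complex) \<Rightarrow> (nat \<Rightarrow> nat \<Rightarrow> int \<Rightarrow> complex) \<Rightarrow>
     (nat \<Rightarrow> nat \<Rightarrow> complex) \<Rightarrow> int \<Rightarrow> complex" where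
  "diag_pairing m p c \<tau> v d = (\<Sum>a<m. \<Sum>b<m. \<Sum>i<p. \<Sum>j<p. cnj (v a i) * (c a b d * \<tau> i j d) * v b j)"

text \<open>The Schur product of the \<open>N\<close>-th finite section of \<open>[T_(c a b)]\<close> with a positive
  completion of the band of \<open>\<tau>\<close>; since \<open>c\<close> vanishes off the band, only \<open>\<tau>\<close> itself is seen.\<close>

lemma psd_section_schur_product:
  fixes \<tau> c :: "nat \<Rightarrow> nat \<Rightarrow> int \<Rightarrow> complex"
  assumes G: "psd ({..<n} \<times> {..<p}) (block_toeplitz \<tau>)" and "1 \<le> n" "n \<le> N"
    and band: "\<forall>a<m. \<forall>b<m. banded n (c a b)"
    and op: "opmat_pos m (\<lambda>a b. toeplitz (c a b))"
  shows "psd ({..<N} \<times> ({..<m} \<times> {..<p}))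
    (\<lambda>(k, a, i) (l, b, j). c a b (int k - int l) * \<tau> i j (int k - int l))"
proof -
  obtain H where H: "psd ({..<N} \<times> {..<p}) H"
    "\<forall>x\<in>{..<N} \<times> {..<p}. \<forall>y\<in>{..<N} \<times> {..<p}.
       \<bar>int (fst x) - int (fst y)\<bar> < int n \<longrightarrow> H x y = block_toeplitz \<tau> x y"
    using block_toeplitz_band_completion[OF G \<open>1 \<le> n\<close> \<open>n \<le> N\<close>] by blast
  define Z where "Z = {..<N} \<times> ({..<m} \<times> {..<p})"
  define f1 where "f1 z = (fst z, fst (snd z))" for z :: "nat \<times> nat \<times> nat"
  define f2 where "f2 z = (fst z, snd (snd z))" for z :: "nat \<times> nat \<times> nat"
  have "psd Z (\<lambda>z w. block_toeplitz c (f1 z) (f1 w) * H (f2 z) (f2 w))"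
  proof (rule psd_schur_product)
    show "psd Z (\<lambda>z w. block_toeplitz c (f1 z) (f1 w))"
      by (rule psd_pullback[OF _ _ _ psd_finite_section[OF op, of N]]) (auto simp: Z_def f1_def)
    show "psd Z (\<lambda>z w. H (f2 z) (f2 w))"
      by (rule psd_pullback[OF _ _ _ H(1)]) (auto simp: Z_def f2_def)
  qed (simp add: Z_def)
  moreover have "psd Z (\<lambda>z w. block_toeplitz c (f1 z) (f1 w) * H (f2 z) (f2 w))
      \<longleftrightarrow> psd Z (\<lambda>(k, a, i) (l, b, j). c a b (int k - int l) * \<tau> i j (int k - int l))"
  proof (rule psd_cong)
    fix z w assume "z \<in> Z" "w \<in> Z"
    then obtain k a i l b j where zw: "z = (k, a, i)" "w = (l, b, j)"
      and "k < N" "l < N" "a < m" "b < m" "i < p" "j < p"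
      unfolding Z_def by (metis SigmaE lessThan_iff)
    show "block_toeplitz c (f1 z) (f1 w) * H (f2 z) (f2 w)
        = (\<lambda>(k, a, i) (l, b, j). c a b (int k - int l) * \<tau> i j (int k - int l)) z w"
    proof (cases "\<bar>int k - int l\<bar> < int n")
      case True
      then show ?thesis
        using H(2) \<open>k < N\<close> \<open>l < N\<close> \<open>i < p\<close> \<open>j < p\<close> unfolding zw f1_def f2_def block_toeplitz_def by auto
    next
      case False
      then show ?thesis
        using band \<open>a < m\<close> \<open>b < m\<close> unfolding zw f1_def block_toeplitz_def banded_def by simp
    qed
  qed
  ultimately show ?thesis unfolding Z_def by simp
qed

lemma section_diag_pairing_nonneg:
  fixes \<tau> c :: "nat \<Rightarrow> nat \<Rightarrow> int \<Rightarrow> complex"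
  assumes "psd ({..<n} \<times> {..<p}) (block_toeplitz \<tau>)" and "1 \<le> n" "n \<le> N"
    and "\<forall>a<m. \<forall>b<m. banded n (c a b)"
    and "opmat_pos m (\<lambda>a b. toeplitz (c a b))"
  shows "0 \<le> (\<Sum>k<N. \<Sum>l<N. diag_pairing m p c \<tau> v (int k - int l))"
proof -
  let ?P = "\<lambda>(k, a, i) (l, b, j). c a b (int k - int l) * \<tau> i j (int k - int l)"
  let ?u = "\<lambda>(k :: nat, a, i). v a i"
  have "0 \<le> sesq ({..<N} \<times> ({..<m} \<times> {..<p})) ?P ?u ?u"
    using psd_section_schur_product[OF assms] unfolding psd_def by blast
  also have "\<dots> = (\<Sum>k<N. \<Sum>a<m. \<Sum>i<p. \<Sum>l<N. \<Sum>b<m. \<Sum>j<p.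
          cnj (v a i) * (c a b (int k - int l) * \<tau> i j (int k - int l)) * v b j)"
    unfolding sesq_product sum.cartesian_product' by simp
  also have "\<dots> = (\<Sum>k<N. \<Sum>a<m. \<Sum>l<N. \<Sum>i<p. \<Sum>b<m. \<Sum>j<p.
          cnj (v a i) * (c a b (int k - int l) * \<tau> i j (int k - int l)) * v b j)"
    by (rule sum.cong[OF refl], rule sum.cong[OF refl], rule sum.swap)
  also have "\<dots> = (\<Sum>k<N. \<Sum>l<N. \<Sum>a<m. \<Sum>i<p. \<Sum>b<m. \<Sum>j<p.
          cnj (v a i) * (c a b (int k - int l) * \<tau> i j (int k - int l)) * v b j)"
    by (rule sum.cong[OF refl], rule sum.swap)
  also have "\<dots> = (\<Sum>k<N. \<Sum>l<N. diag_pairing m p c \<tau> v (int k - int l))"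
    unfolding diag_pairing_def
    by (rule sum.cong[OF refl], rule sum.cong[OF refl], rule sum.cong[OF refl], rule sum.swap)
  finally show ?thesis .
qed

text \<open>The section sums grow affinely in \<open>N\<close> with slope the full pairing, which therefore
  cannot be negative.\<close>

lemma diag_pairing_sum_nonneg:
  fixes \<tau> c :: "nat \<Rightarrow> nat \<Rightarrow> int \<Rightarrow> complex"
  assumes G: "psd ({..<n} \<times> {..<p}) (block_toeplitz \<tau>)"
    and band: "\<forall>a<m. \<forall>b<m. banded n (c a b)"
    and op: "opmat_pos m (\<lambda>a b. toeplitz (c a b))"
  shows "0 \<le> (\<Sum>d\<in>diagonals n. diag_pairing m p c \<tau> v d)"
proof (cases "n = 0")
  case True
  then show ?thesis by (simp add: diagonals_def)
next
  case False
  define h where "h = diag_pairing m p c \<tau> v"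
  define S where "S N = (\<Sum>k<N. \<Sum>l<N. h (int k - int l))" for N
  have h_zero: "h d = 0" if "d \<notin> diagonals n" for d
  proof -
    have "c a b d = 0" if "a < m" "b < m" for a b
      using band banded_zero_outside \<open>d \<notin> diagonals n\<close> that by blast
    then show ?thesis unfolding h_def diag_pairing_def by simp
  qed
  have "S (Suc N) = S N + (\<Sum>d\<in>diagonals n. h d)" if "n \<le> N" for N
    unfolding S_def by (rule sum_toeplitz_square_Suc[OF h_zero that])
  then have "S (n + Suc t) = S (n + t) + (\<Sum>d\<in>diagonals n. h d)" for t
    by simp
  then have "S (n + t) = S n + of_nat t * (\<Sum>d\<in>diagonals n. h d)" for t
    by (induction t) (simp_all add: algebra_simps)
  moreover have "0 \<le> S (n + t)" for t
    unfolding S_def h_def using False by (intro section_diag_pairing_nonneg[OF G _ _ band op]) auto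
  ultimately show ?thesis
    unfolding h_def by (metis nonneg_if_affine_nonneg)
qed

definition dual_to_toeplitz :: "nat \<Rightarrow> functional \<Rightarrow> cmat" where
  "dual_to_toeplitz n \<phi> =
     (\<lambda>k l. if k < n \<and> l < n then \<phi> (toeplitz (basis_symbol (int k - int l))) else 0)"

lemma dual_to_toeplitz_in_toeplitz_mats: "dual_to_toeplitz n \<phi> \<in> toeplitz_mats n"
  unfolding toeplitz_mats_def dual_to_toeplitz_def
  by (rule CollectI, rule exI[of _ "\<lambda>d. \<phi> (toeplitz (basis_symbol d))"]) simp

lemma dual_to_toeplitz_diag:
  "d \<in> diagonals n \<Longrightarrow> dual_to_toeplitz n \<phi> (nat d) (nat (- d)) = \<phi> (toeplitz (basis_symbol d))"
  unfolding dual_to_toeplitz_def mem_diagonals_iff by auto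

lemma dual_space_outside: "\<phi> \<in> dual_space n \<Longrightarrow> T \<notin> toeplitz_system n \<Longrightarrow> \<phi> T = 0"
  unfolding dual_space_def by simp

lemma inj_on_dual_to_toeplitz: "inj_on (dual_to_toeplitz n) (dual_space n)"
proof (rule inj_onI)
  fix \<phi> \<psi>
  assume \<phi>: "\<phi> \<in> dual_space n" and \<psi>: "\<psi> \<in> dual_space n"
    and eq: "dual_to_toeplitz n \<phi> = dual_to_toeplitz n \<psi>"
  have basis: "\<phi> (toeplitz (basis_symbol d)) = \<psi> (toeplitz (basis_symbol d))" if "d \<in> diagonals n" for d
    using dual_to_toeplitz_diag[OF that, of \<phi>] dual_to_toeplitz_diag[OF that, of \<psi>] eq by simp
  show "\<phi> = \<psi>"
  proof
    fix T
    show "\<phi> T = \<psi> T"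
    proof (cases "T \<in> toeplitz_system n")
      case True
      then obtain c where c: "banded n c" "T = toeplitz c"
        unfolding toeplitz_system_eq by blast
      then show ?thesis
        using dual_space_toeplitz_expand[OF \<phi> c(1)] dual_space_toeplitz_expand[OF \<psi> c(1)] basis
        by simp
    next
      case False
      then show ?thesis by (simp add: dual_space_outside[OF \<phi>] dual_space_outside[OF \<psi>])
    qed
  qed
qed

definition toeplitz_functional :: "nat \<Rightarrow> (int \<Rightarrow> complex) \<Rightarrow> functional" where
  "toeplitz_functional n \<tau> T =
     (if T \<in> toeplitz_system n then \<Sum>d\<in>diagonals n. symbol_of T d * \<tau> d else 0)"

lemma toeplitz_functional_in_dual_space: "toeplitz_functional n \<tau> \<in> dual_space n"
  unfolding dual_space_def
proof (intro CollectI conjI ballI allI impI)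
  fix T S assume "T \<in> toeplitz_system n" "S \<in> toeplitz_system n"
  then show "toeplitz_functional n \<tau> (op_add T S) = toeplitz_functional n \<tau> T + toeplitz_functional n \<tau> S"
    unfolding toeplitz_functional_def
    by (simp add: toeplitz_system_add symbol_of_add sum.distrib distrib_right)
next
  fix a T assume "T \<in> toeplitz_system n"
  then show "toeplitz_functional n \<tau> (op_scale a T) = a * toeplitz_functional n \<tau> T"
    unfolding toeplitz_functional_def
    by (simp add: toeplitz_system_scale symbol_of_scale sum_distrib_left mult.assoc)
qed (simp add: toeplitz_functional_def)

lemma dual_to_toeplitz_toeplitz_functional:
  "dual_to_toeplitz n (toeplitz_functional n \<tau>)
     = (\<lambda>k l. if k < n \<and> l < n then \<tau> (int k - int l) else 0)"
proof (intro ext)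
  fix k l
  show "dual_to_toeplitz n (toeplitz_functional n \<tau>) k l = (if k < n \<and> l < n then \<tau> (int k - int l) else 0)"
  proof (cases "k < n \<and> l < n")
    case True
    then have D: "int k - int l \<in> diagonals n" by (simp add: diff_mem_diagonals)
    have "toeplitz_functional n \<tau> (toeplitz (basis_symbol (int k - int l))) = \<tau> (int k - int l)"
    proof -
      have "(\<Sum>d\<in>diagonals n. basis_symbol (int k - int l) d * \<tau> d)
          = (\<Sum>d\<in>diagonals n. if d = int k - int l then \<tau> d else 0)"
        by (intro sum.cong refl) (simp add: basis_symbol_def)
      then show ?thesis
        unfolding toeplitz_functional_def
        using toeplitz_in_toeplitz_system[OF banded_basis_symbol[OF D]] D by simp
    qed
    then show ?thesis using True unfolding dual_to_toeplitz_def by simp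
  qed (auto simp: dual_to_toeplitz_def)
qed

lemma bij_betw_dual_to_toeplitz: "bij_betw (dual_to_toeplitz n) (dual_space n) (toeplitz_mats n)"
proof -
  have "A \<in> dual_to_toeplitz n ` dual_space n" if A: "A \<in> toeplitz_mats n" for A
  proof -
    obtain \<tau> where "\<forall>k l. A k l = (if k < n \<and> l < n then \<tau> (int k - int l) else 0)"
      using A unfolding toeplitz_mats_def by blast
    then have "A = dual_to_toeplitz n (toeplitz_functional n \<tau>)"
      by (auto simp: dual_to_toeplitz_toeplitz_functional)
    then show ?thesis using toeplitz_functional_in_dual_space by blast
  qed
  then show ?thesis
    unfolding bij_betw_def using inj_on_dual_to_toeplitz dual_to_toeplitz_in_toeplitz_mats by blast
qed

lemma dual_to_toeplitz_unit:
  assumes "\<forall>f\<in>trig_space n. \<phi> (toeplitz_op f) = fourier_coeff f 0"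
  shows "dual_to_toeplitz n \<phi> = id_mat n"
proof (intro ext)
  fix k l
  show "dual_to_toeplitz n \<phi> k l = id_mat n k l"
  proof (cases "k < n \<and> l < n")
    case True
    then have "banded n (basis_symbol (int k - int l))"
      by (simp add: banded_basis_symbol diff_mem_diagonals)
    then have "toeplitz (basis_symbol (int k - int l)) = toeplitz_op (trig_poly n (basis_symbol (int k - int l)))"
      and "trig_poly n (basis_symbol (int k - int l)) \<in> trig_space n"
      by (simp_all add: toeplitz_op_eq_toeplitz fourier_coeff_trig_poly trig_poly_in_trig_space)
    then have "\<phi> (toeplitz (basis_symbol (int k - int l))) = basis_symbol (int k - int l) 0"
      using assms \<open>banded n (basis_symbol (int k - int l))\<close> by (simp add: fourier_coeff_trig_poly)
    then show ?thesis using True unfolding dual_to_toeplitz_def id_mat_def basis_symbol_def by auto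
  qed (auto simp: dual_to_toeplitz_def id_mat_def)
qed

lemma sesq_block_toeplitz:
  assumes "\<And>i j k l. i < p \<Longrightarrow> j < p \<Longrightarrow> k < n \<Longrightarrow> l < n \<Longrightarrow> B i j k l = \<tau> i j (int k - int l)"
  shows "sesq ({..<n} \<times> {..<p}) (block_toeplitz \<tau>) u u
    = (\<Sum>i<p. \<Sum>j<p. \<Sum>k<n. \<Sum>l<n. cnj (u (k, i)) * B i j k l * u (l, j))"
proof -
  have "sesq ({..<n} \<times> {..<p}) (block_toeplitz \<tau>) u u
      = (\<Sum>k<n. \<Sum>i<p. \<Sum>l<n. \<Sum>j<p. cnj (u (k, i)) * B i j k l * u (l, j))"
    unfolding sesq_product block_toeplitz_def using assms by (intro sum.cong refl) simp
  also have "\<dots> = (\<Sum>i<p. \<Sum>k<n. \<Sum>j<p. \<Sum>l<n. cnj (u (k, i)) * B i j k l * u (l, j))"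
    by (subst sum.swap) (rule sum.cong[OF refl], rule sum.cong[OF refl], rule sum.swap)
  also have "\<dots> = (\<Sum>i<p. \<Sum>j<p. \<Sum>k<n. \<Sum>l<n. cnj (u (k, i)) * B i j k l * u (l, j))"
    by (rule sum.cong[OF refl], rule sum.swap)
  finally show ?thesis .
qed

lemma blockmat_pos_iff_psd_block_toeplitz:
  assumes "\<And>i j k l. i < p \<Longrightarrow> j < p \<Longrightarrow> k < n \<Longrightarrow> l < n \<Longrightarrow> B i j k l = \<tau> i j (int k - int l)"
  shows "blockmat_pos p n B \<longleftrightarrow> psd ({..<n} \<times> {..<p}) (block_toeplitz \<tau>)"
proof -
  have sesq_eq: "sesq ({..<n} \<times> {..<p}) (block_toeplitz \<tau>) u u
      = (\<Sum>i<p. \<Sum>j<p. \<Sum>k<n. \<Sum>l<n. cnj (u (k, i)) * B i j k l * u (l, j))" for u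
    by (rule sesq_block_toeplitz[where B = B and \<tau> = \<tau> and n = n and p = p, OF assms])
  show ?thesis
  proof
    assume B: "blockmat_pos p n B"
    show "psd ({..<n} \<times> {..<p}) (block_toeplitz \<tau>)"
      unfolding psd_def
    proof
      fix u :: "nat \<times> nat \<Rightarrow> complex"
      have "cnonneg (\<Sum>i<p. \<Sum>j<p. \<Sum>k<n. \<Sum>l<n. cnj (u (k, i)) * B i j k l * u (l, j))"
        using B unfolding blockmat_pos_def by (rule allE[where x = "\<lambda>i k. u (k, i)"])
      then show "0 \<le> sesq ({..<n} \<times> {..<p}) (block_toeplitz \<tau>) u u"
        unfolding sesq_eq cnonneg_iff_nonneg .
    qed
  next
    assume G: "psd ({..<n} \<times> {..<p}) (block_toeplitz \<tau>)"
    show "blockmat_pos p n B"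
      unfolding blockmat_pos_def cnonneg_iff_nonneg
    proof
      fix v :: "nat \<Rightarrow> nat \<Rightarrow> complex"
      have "0 \<le> sesq ({..<n} \<times> {..<p}) (block_toeplitz \<tau>) (\<lambda>x. v (snd x) (fst x)) (\<lambda>x. v (snd x) (fst x))"
        using G unfolding psd_def by blast
      then show "0 \<le> (\<Sum>i<p. \<Sum>j<p. \<Sum>k<n. \<Sum>l<n. cnj (v i k) * B i j k l * v j l)"
        unfolding sesq_eq by simp
    qed
  qed
qed

lemma opmat_pos_cong:
  assumes "\<And>a b. a < m \<Longrightarrow> b < m \<Longrightarrow> R a b = R' a b"
  shows "opmat_pos m R \<longleftrightarrow> opmat_pos m R'"
proof -
  have "(\<Sum>a<m. \<Sum>b<m. l2_inner (R a b (x b)) (x a)) = (\<Sum>a<m. \<Sum>b<m. l2_inner (R' a b (x b)) (x a))" for x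
    using assms by (intro sum.cong refl) auto
  then show ?thesis unfolding opmat_pos_def by simp
qed

lemma dual_mat_pos_imp_psd_block_toeplitz:
  assumes "dual_mat_pos n p \<Phi>"
  shows "psd ({..<n} \<times> {..<p}) (block_toeplitz (\<lambda>i j d. \<Phi> i j (toeplitz (basis_symbol d))))"
  unfolding psd_def
proof
  fix u :: "nat \<times> nat \<Rightarrow> complex"
  have "\<forall>a<n. \<forall>b<n. toeplitz (basis_symbol (int a - int b)) \<in> toeplitz_system n"
    by (simp add: toeplitz_in_toeplitz_system banded_basis_symbol diff_mem_diagonals)
  then have "blockmat_pos n p (\<lambda>a b i j. \<Phi> i j (toeplitz (basis_symbol (int a - int b))))"
    using assms[unfolded dual_mat_pos_def, rule_format, of n "\<lambda>a b. toeplitz (basis_symbol (int a - int b))"]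
      opmat_pos_basis_shifts by blast
  then have "0 \<le> (\<Sum>a<n. \<Sum>b<n. \<Sum>i<p. \<Sum>j<p.
      cnj (u (a, i)) * \<Phi> i j (toeplitz (basis_symbol (int a - int b))) * u (b, j))"
    unfolding blockmat_pos_def cnonneg_iff_nonneg by (rule allE[where x = "\<lambda>a i. u (a, i)"])
  also have "\<dots> = sesq ({..<n} \<times> {..<p}) (block_toeplitz (\<lambda>i j d. \<Phi> i j (toeplitz (basis_symbol d)))) u u"
    unfolding sesq_product block_toeplitz_def fst_conv snd_conv
    by (rule sum.cong[OF refl], rule sum.swap)
  finally show "0 \<le> sesq ({..<n} \<times> {..<p}) (block_toeplitz (\<lambda>i j d. \<Phi> i j (toeplitz (basis_symbol d)))) u u" .
qed

lemma blockmat_form_eq_sum_diag_pairing: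
  assumes "\<forall>i<p. \<forall>j<p. \<Phi> i j \<in> dual_space n" "\<forall>a<m. \<forall>b<m. banded n (c a b)"
  shows "(\<Sum>a<m. \<Sum>b<m. \<Sum>i<p. \<Sum>j<p. cnj (v a i) * \<Phi> i j (toeplitz (c a b)) * v b j)
    = (\<Sum>d\<in>diagonals n. diag_pairing m p c (\<lambda>i j d. \<Phi> i j (toeplitz (basis_symbol d))) v d)"
proof -
  have "cnj (v a i) * \<Phi> i j (toeplitz (c a b)) * v b j
      = (\<Sum>d\<in>diagonals n. cnj (v a i) * (c a b d * \<Phi> i j (toeplitz (basis_symbol d))) * v b j)"
    if "a < m" "b < m" "i < p" "j < p" for a b i j
    using assms that dual_space_toeplitz_expand[of "\<Phi> i j" n "c a b"]
    by (simp add: sum_distrib_left sum_distrib_right)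
  then show ?thesis
    unfolding diag_pairing_def by (simp add: sum.swap[where B = "diagonals n"])
qed

lemma psd_block_toeplitz_imp_dual_mat_pos:
  assumes dual: "\<forall>i<p. \<forall>j<p. \<Phi> i j \<in> dual_space n"
    and G: "psd ({..<n} \<times> {..<p}) (block_toeplitz (\<lambda>i j d. \<Phi> i j (toeplitz (basis_symbol d))))"
  shows "dual_mat_pos n p \<Phi>"
  unfolding dual_mat_pos_def
proof (intro allI impI, elim conjE)
  fix m and R :: "nat \<Rightarrow> nat \<Rightarrow> hop"
  assume R: "\<forall>a<m. \<forall>b<m. R a b \<in> toeplitz_system n" and "opmat_pos m R"
  define c where "c a b = symbol_of (R a b)" for a b
  have c: "banded n (c a b)" "R a b = toeplitz (c a b)" if "a < m" "b < m" for a b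
    using toeplitz_system_cases[of "R a b" n] R that unfolding c_def by auto
  have "opmat_pos m (\<lambda>a b. toeplitz (c a b))"
    using \<open>opmat_pos m R\<close> c(2) by (subst opmat_pos_cong[where R' = R]) auto
  show "blockmat_pos m p (\<lambda>a b i j. \<Phi> i j (R a b))"
    unfolding blockmat_pos_def cnonneg_iff_nonneg
  proof
    fix v :: "nat \<Rightarrow> nat \<Rightarrow> complex"
    have "(\<Sum>a<m. \<Sum>b<m. \<Sum>i<p. \<Sum>j<p. cnj (v a i) * \<Phi> i j (R a b) * v b j)
        = (\<Sum>a<m. \<Sum>b<m. \<Sum>i<p. \<Sum>j<p. cnj (v a i) * \<Phi> i j (toeplitz (c a b)) * v b j)"
      using c(2) by simp
    also have "\<dots> \<ge> 0"
    proof -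
      have band: "\<forall>a<m. \<forall>b<m. banded n (c a b)" using c(1) by blast
      show ?thesis
        unfolding blockmat_form_eq_sum_diag_pairing[OF dual band]
        by (rule diag_pairing_sum_nonneg[OF G band \<open>opmat_pos m (\<lambda>a b. toeplitz (c a b))\<close>])
    qed
    finally show "0 \<le> (\<Sum>a<m. \<Sum>b<m. \<Sum>i<p. \<Sum>j<p. cnj (v a i) * \<Phi> i j (R a b) * v b j)" .
  qed
qed

lemma dual_mat_pos_iff_blockmat_pos:
  assumes "\<forall>i<p. \<forall>j<p. \<Phi> i j \<in> dual_space n"
  shows "dual_mat_pos n p \<Phi> \<longleftrightarrow> blockmat_pos p n (\<lambda>i j. dual_to_toeplitz n (\<Phi> i j))"
proof -
  have "blockmat_pos p n (\<lambda>i j. dual_to_toeplitz n (\<Phi> i j))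
      \<longleftrightarrow> psd ({..<n} \<times> {..<p}) (block_toeplitz (\<lambda>i j d. \<Phi> i j (toeplitz (basis_symbol d))))"
    by (rule blockmat_pos_iff_psd_block_toeplitz) (simp add: dual_to_toeplitz_def)
  then show ?thesis
    using assms dual_mat_pos_imp_psd_block_toeplitz psd_block_toeplitz_imp_dual_mat_pos by blast
qed

theorem corollary4p2:
  fixes n :: nat
  shows "\<exists>\<Psi>. ucoi n \<Psi>"
proof
  show "ucoi n (dual_to_toeplitz n)"
    unfolding ucoi_def
  proof (intro conjI ballI allI impI)
    show "bij_betw (dual_to_toeplitz n) (dual_space n) (toeplitz_mats n)"
      by (rule bij_betw_dual_to_toeplitz)
    show "dual_to_toeplitz n (\<lambda>T. \<phi> T + \<psi> T) = (\<lambda>k l. dual_to_toeplitz n \<phi> k l + dual_to_toeplitz n \<psi> k l)"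
      and "dual_to_toeplitz n (\<lambda>T. c * \<phi> T) = (\<lambda>k l. c * dual_to_toeplitz n \<phi> k l)" for \<phi> \<psi> c
      by (simp_all add: dual_to_toeplitz_def fun_eq_iff)
    show "dual_to_toeplitz n \<phi> = id_mat n"
      if "\<forall>f\<in>trig_space n. \<phi> (toeplitz_op f) = fourier_coeff f 0" for \<phi>
      using that by (rule dual_to_toeplitz_unit)
    show "dual_mat_pos n p \<Phi> \<longleftrightarrow> blockmat_pos p n (\<lambda>i j. dual_to_toeplitz n (\<Phi> i j))"
      if "\<forall>i<p. \<forall>j<p. \<Phi> i j \<in> dual_space n" for p \<Phi>
      using that by (rule dual_mat_pos_iff_blockmat_pos)
  qed
qed

end
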